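(* Let $A\in\mathbb{R}^{n\times d}$ have rows $a_1^\top,\dots,a_n^\top$, let $f_1,\dots,f_n:\mathbb{R}\to\mathbb{R}$ be convex and each $(1/\gamma)$-smooth with $\gamma>0$, and let $g:\mathbb{R}^d\to\mathbb{R}\cup\{+\infty\}$ be closed and $\mu$-strongly convex with $\mu>0$. Consider the saddle-point problem $\min_x\max_y \tilde F(x,y)$ with $\tilde{F}(x,y)=\frac1n\langle y,Ax\rangle+g(x)-\frac1n\sum_{i=1}^n f_i^*(y_i)$, and let $(x^*,y^* )$ be its (unique) saddle point. Let $\bar R=\max_i\|a_i\|_2$. Run the SDAPD method (described in the context) with $$\eta=\frac{1}{\bar R}\sqrt{\frac{\gamma}{n\mu}},\quad \tau=\frac{1}{\bar R}\sqrt{\frac{n\mu}{\gamma}},\quad \beta_t=\frac{1}{\bar R}\sqrt{\frac{\gamma}{n\mu}}\,\xi^t,\quad \xi=1+\frac{1}{n+\bar R\sqrt{n/(\mu\gamma)}},$$ and for $T\ge1$ define $\hat{x}^T=\frac{1}{B_{T-1}}\sum_{t=0}^{T-1}\beta_t\bar{x}^{t+1}$. Then there is a constant $\Delta_0\ge0$, independent of $T$ and depending only on the problem data ($\bar R$, $n$, $\mu$, $\gamma$, $A$, $f_i$, $g$), the initial point $(x^0,y^0)$ and $(x^*,y^* )$, such that for all $T\ge 1$ $$\mathbb{E}\|\hat{x}^T-x^*\|_2^2\le\frac{\Delta_0}{\xi^T-1}.$$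
   Context: $f_i^*$ is the convex conjugate of $f_i$; $\operatorname{prox}_h(u)=\arg\min_v\{h(v)+\frac12\|v-u\|_2^2\}$. SDAPD method: given $x^0\in\mathbb{R}^d$, $y^0\in\mathbb{R}^n$, $\eta,\tau>0$ and $\beta_t>0$, set $B_t=\sum_{k=0}^t\beta_k$. For $t=0,1,\dots$: sample $i_t$ uniformly from $\{1,\dots,n\}$, independently of the past; compute $\bar{x}^{t+1}=\operatorname{prox}_{\eta g}(x^t-\frac{\eta}{n}A^\top y^t)$; set $y^{t+1}_{i}=\operatorname{prox}_{\tau f_i^*}(y_i^t+\tau\langle a_i,\bar{x}^{t+1}\rangle)$ if $i=i_t$ and $y^{t+1}_i=y^t_i$ otherwise; set $\bar{y}^{t+1}=y^t+n(y^{t+1}-y^t)$; set $x^{t+1}=\operatorname{prox}_{B_t g}(x^0-s^{t+1})$ with $s^{t+1}=\sum_{k=0}^t\frac{\beta_k}{n}A^\top\bar{y}^{k+1}$. The expectation is over the random indices $i_0,i_1,\dots$. *)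

theory Defs
  imports "HOL-Analysis.Analysis"
begin

definition conj_fun :: "(real \<Rightarrow> real) \<Rightarrow> real \<Rightarrow> ereal" where
  "conj_fun f s = (SUP x. ereal (s * x - f x))"

definition prox :: "('a::real_normed_vector \<Rightarrow> ereal) \<Rightarrow> 'a \<Rightarrow> 'a" where
  "prox h u = (SOME v. \<forall>w. h v + ereal (norm (v - u)^2 / 2) \<le> h w + ereal (norm (w - u)^2 / 2))"

definition smooth_with :: "real \<Rightarrow> (real \<Rightarrow> real) \<Rightarrow> bool" where
  "smooth_with L f \<longleftrightarrow> (\<forall>x. f differentiable (at x)) \<and>
     (\<forall>x y. \<bar>deriv f x - deriv f y\<bar> \<le> L * \<bar>x - y\<bar>)"

definition closed_proper_fun :: "('a::topological_space \<Rightarrow> ereal) \<Rightarrow> bool" where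
  "closed_proper_fun g \<longleftrightarrow> (\<forall>x. g x \<noteq> -\<infinity>) \<and> (\<exists>x. g x < \<infinity>) \<and>
     closed {(x, t::real). g x \<le> ereal t}"

definition strongly_convex_ereal :: "real \<Rightarrow> ('a::real_normed_vector \<Rightarrow> ereal) \<Rightarrow> bool" where
  "strongly_convex_ereal \<mu> g \<longleftrightarrow> (\<forall>x y \<theta>. 0 < \<theta> \<and> \<theta> < 1 \<longrightarrow>
     g (\<theta> *\<^sub>R x + (1 - \<theta>) *\<^sub>R y) \<le>
       ereal \<theta> * g x + ereal (1 - \<theta>) * g y - ereal (\<mu> / 2 * \<theta> * (1 - \<theta>) * norm (x - y)^2))"

definition Ftil :: "real^'d^'n \<Rightarrow> ('n::finite \<Rightarrow> real \<Rightarrow> real) \<Rightarrow> (real^'d \<Rightarrow> ereal)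
    \<Rightarrow> real^'d \<Rightarrow> real^'n \<Rightarrow> ereal" where
  "Ftil A f g x y = ereal (inner y (A *v x) / real CARD('n)) + g x
      - (\<Sum>i\<in>UNIV. conj_fun (f i) (y $ i)) / ereal (real CARD('n))"

definition is_saddle :: "real^'d^'n \<Rightarrow> ('n::finite \<Rightarrow> real \<Rightarrow> real) \<Rightarrow> (real^'d \<Rightarrow> ereal)
    \<Rightarrow> real^'d \<Rightarrow> real^'n \<Rightarrow> bool" where
  "is_saddle A f g xs ys \<longleftrightarrow> g xs < \<infinity> \<and> (\<forall>i. conj_fun (f i) (ys $ i) < \<infinity>) \<and>
     (\<forall>x y. Ftil A f g xs y \<le> Ftil A f g xs ys \<and> Ftil A f g xs ys \<le> Ftil A f g x ys)"

definition Bsum :: "(nat \<Rightarrow> real) \<Rightarrow> nat \<Rightarrow> real" where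
  "Bsum \<beta> t = (\<Sum>k\<le>t. \<beta> k)"

fun sdapd_state :: "real^'d^'n \<Rightarrow> ('n::finite \<Rightarrow> real \<Rightarrow> real) \<Rightarrow> (real^'d \<Rightarrow> ereal)
    \<Rightarrow> real \<Rightarrow> real \<Rightarrow> (nat \<Rightarrow> real) \<Rightarrow> real^'d \<Rightarrow> real^'n \<Rightarrow> (nat \<Rightarrow> 'n)
    \<Rightarrow> nat \<Rightarrow> (real^'d) \<times> (real^'n) \<times> (real^'d)" where
  "sdapd_state A f g \<eta> \<tau> \<beta> x0 y0 I 0 = (x0, y0, 0)"
| "sdapd_state A f g \<eta> \<tau> \<beta> x0 y0 I (Suc t) =
    (let (x, y, s) = sdapd_state A f g \<eta> \<tau> \<beta> x0 y0 I t;
         n = real CARD('n);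
         xb = prox (\<lambda>v. ereal \<eta> * g v) (x - (\<eta> / n) *\<^sub>R (transpose A *v y));
         i = I t;
         y' = (\<chi> j. if j = i then prox (\<lambda>v. ereal \<tau> * conj_fun (f i) v) (y $ i + \<tau> * inner (A $ i) xb)
                     else y $ j);
         yb = y + n *\<^sub>R (y' - y);
         s' = s + (\<beta> t / n) *\<^sub>R (transpose A *v yb);
         x' = prox (\<lambda>v. ereal (Bsum \<beta> t) * g v) (x0 - s')
     in (x', y', s'))"

text \<open>xbar^{t+1}, computed from (x^t, y^t).\<close>
definition sdapd_xbar :: "real^'d^'n \<Rightarrow> ('n::finite \<Rightarrow> real \<Rightarrow> real) \<Rightarrow> (real^'d \<Rightarrow> ereal)
    \<Rightarrow> real \<Rightarrow> real \<Rightarrow> (nat \<Rightarrow> real) \<Rightarrow> real^'d \<Rightarrow> real^'n \<Rightarrow> (nat \<Rightarrow> 'n)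
    \<Rightarrow> nat \<Rightarrow> real^'d" where
  "sdapd_xbar A f g \<eta> \<tau> \<beta> x0 y0 I t =
    (let (x, y, s) = sdapd_state A f g \<eta> \<tau> \<beta> x0 y0 I t
     in prox (\<lambda>v. ereal \<eta> * g v) (x - (\<eta> / real CARD('n)) *\<^sub>R (transpose A *v y)))"

definition sdapd_xhat :: "real^'d^'n \<Rightarrow> ('n::finite \<Rightarrow> real \<Rightarrow> real) \<Rightarrow> (real^'d \<Rightarrow> ereal)
    \<Rightarrow> real \<Rightarrow> real \<Rightarrow> (nat \<Rightarrow> real) \<Rightarrow> real^'d \<Rightarrow> real^'n \<Rightarrow> (nat \<Rightarrow> 'n)
    \<Rightarrow> nat \<Rightarrow> real^'d" where
  "sdapd_xhat A f g \<eta> \<tau> \<beta> x0 y0 I T =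
     (1 / Bsum \<beta> (T - 1)) *\<^sub>R (\<Sum>t<T. \<beta> t *\<^sub>R sdapd_xbar A f g \<eta> \<tau> \<beta> x0 y0 I t)"

text \<open>Expectation over i_0, ..., i_{T-1} i.i.d. uniform on the index type: average over all
  index lists of length T.\<close>
definition expect_idx :: "nat \<Rightarrow> ((nat \<Rightarrow> 'n::finite) \<Rightarrow> real) \<Rightarrow> real" where
  "expect_idx T h = (\<Sum>xs\<in>{xs::'n list. length xs = T}. h (\<lambda>k. xs ! k)) / real CARD('n) ^ T"

end

theory Submission
  imports Defs
begin

text \<open>
  The iterate x^t minimises the dual averaging objective
  B_{t-1} g(w) + <s^t, w> + ||w - x^0||^2 / 2, and its optimality gap at x^* together with the
  weighted dual distance beta_t c ||y^t - y^*||^2 / (2 tau), c = 1 + tau gamma (n - 1) / n,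
  is a Lyapunov function V_t.
  Strong convexity of g (through the two proximal steps in x), strong convexity of f_i^*
  (inherited from the smoothness of f_i, through the proximal step in y) and the optimality
  conditions of the saddle point show that on average over i_t
  V_{t+1} + beta_t mu/2 ||xbar^{t+1} - x^*||^2 <= V_t; the step-size conditions are exactly what
  is needed to absorb the coupling terms by Young's inequality. Taking expectations and telescoping
  bounds the expected sum of beta_t mu/2 ||xbar^{t+1} - x^*||^2 by V_0, and Jensen's inequality for
  the weighted mean xhat^T, with B_{T-1} = eta (xi^T - 1) / (xi - 1), gives the claim with
  Delta_0 = 2 V_0 (xi - 1) / (mu eta).
\<close>

section \<open>Strong convexity and proximal maps\<close>

lemma le_diff_of_le_diff_scaled:
  fixes a b K :: real
  assumes "\<And>\<theta>. 0 < \<theta> \<Longrightarrow> \<theta> < 1 \<Longrightarrow> a \<le> b - (1 - \<theta>) * K"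
  shows "a \<le> b - K"
proof (rule tendsto_lowerbound)
  show "((\<lambda>\<theta>. b - (1 - \<theta>) * K) \<longlongrightarrow> b - K) (at_right 0)"
    by (auto intro!: tendsto_eq_intros)
  have "\<forall>\<^sub>F \<theta> in at_right 0. \<theta> \<in> {0<..<(1::real)}" by (rule eventually_at_right_real) simp
  then show "\<forall>\<^sub>F \<theta> in at_right 0. a \<le> b - (1 - \<theta>) * K"
    by eventually_elim (use assms in auto)
qed simp

lemma strongly_convex_ereal_argmin_growth:
  fixes h :: "'a::real_normed_vector \<Rightarrow> ereal"
  assumes sc: "strongly_convex_ereal m h" and min: "\<And>z. h v \<le> h z"
  shows "h v + ereal (m / 2 * norm (w - v)^2) \<le> h w"
proof (cases "h v")
  case (real hv)
  show ?thesis
  proof (cases "h w")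
    case (real hw)
    define D where "D = m / 2 * norm (w - v)^2"
    have "hv \<le> hw - D"
    proof (rule le_diff_of_le_diff_scaled)
      fix \<theta> :: real assume \<theta>: "0 < \<theta>" "\<theta> < 1"
      have "h v \<le> h (\<theta> *\<^sub>R w + (1 - \<theta>) *\<^sub>R v)" by (rule min)
      also have "\<dots> \<le> ereal \<theta> * h w + ereal (1 - \<theta>) * h v - ereal (\<theta> * (1 - \<theta>) * D)"
        using sc \<theta> unfolding strongly_convex_ereal_def D_def by (simp add: mult_ac)
      finally have "\<theta> * hv \<le> \<theta> * (hw - (1 - \<theta>) * D)"
        using \<open>h v = ereal hv\<close> \<open>h w = ereal hw\<close> by (simp add: algebra_simps)
      thus "hv \<le> hw - (1 - \<theta>) * D" using \<theta> by simp
    qed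
    thus ?thesis using \<open>h v = ereal hv\<close> \<open>h w = ereal hw\<close> by (simp add: D_def)
  next
    case MInf thus ?thesis using min[of w] real by simp
  qed simp
next
  case PInf thus ?thesis using min[of w] by simp
qed simp

lemma strongly_convex_ereal_scale_add:
  fixes g :: "'a::real_normed_vector \<Rightarrow> ereal"
  assumes sc: "strongly_convex_ereal \<mu> g" and notm: "\<And>x. g x \<noteq> -\<infinity>" and c: "c > 0"
    and q: "strongly_convex_ereal k (\<lambda>x. ereal (q x))"
  shows "strongly_convex_ereal (c * \<mu> + k) (\<lambda>x. ereal c * g x + ereal (q x))"
  unfolding strongly_convex_ereal_def
proof (intro allI impI)
  fix x y :: 'a and \<theta> :: real
  assume \<theta>: "0 < \<theta> \<and> \<theta> < 1"
  define z where "z = \<theta> *\<^sub>R x + (1 - \<theta>) *\<^sub>R y"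
  define D where "D = \<theta> * (1 - \<theta>) * norm (x - y)^2"
  have "ereal c * g z + ereal (q z) \<le> ereal \<theta> * (ereal c * g x + ereal (q x))
      + ereal (1 - \<theta>) * (ereal c * g y + ereal (q y)) - ereal ((c * \<mu> + k) / 2 * D)"
  proof (cases "g x = \<infinity> \<or> g y = \<infinity>")
    case True
    thus ?thesis using \<theta> c by (auto simp: ereal_mult_infty)
  next
    case False
    then obtain gx gy where gxy: "g x = ereal gx" "g y = ereal gy" using notm by (meson ereal_cases)
    have "g z \<le> ereal \<theta> * g x + ereal (1 - \<theta>) * g y - ereal (\<mu> / 2 * \<theta> * (1 - \<theta>) * norm (x - y)^2)"
      using sc \<theta> unfolding strongly_convex_ereal_def z_def by blast
    also have "\<dots> = ereal (\<theta> * gx + (1 - \<theta>) * gy - \<mu> / 2 * D)" by (simp add: gxy D_def)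
    finally have "g z \<le> ereal (\<theta> * gx + (1 - \<theta>) * gy - \<mu> / 2 * D)" .
    moreover then obtain gz where gz: "g z = ereal gz" using notm by (cases "g z") auto
    ultimately have "c * gz \<le> c * (\<theta> * gx + (1 - \<theta>) * gy - \<mu> / 2 * D)"
      using c by (intro mult_left_mono) auto
    moreover have "q z \<le> \<theta> * q x + (1 - \<theta>) * q y - k / 2 * D"
      using q \<theta> unfolding strongly_convex_ereal_def z_def D_def by (simp add: mult_ac)
    ultimately show ?thesis using gxy gz by (simp add: field_simps)
  qed
  thus "ereal c * g z + ereal (q z) \<le> ereal \<theta> * (ereal c * g x + ereal (q x))
      + ereal (1 - \<theta>) * (ereal c * g y + ereal (q y))
      - ereal ((c * \<mu> + k) / 2 * \<theta> * (1 - \<theta>) * norm (x - y)^2)"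
    by (simp add: D_def mult_ac)
qed

lemma strongly_convex_ereal_half_norm_sq:
  fixes u :: "'a::real_inner"
  shows "strongly_convex_ereal 1 (\<lambda>v. ereal (norm (v - u)^2 / 2))"
  unfolding strongly_convex_ereal_def
proof (intro allI impI)
  fix x y :: 'a and \<theta> :: real
  have "\<theta> *\<^sub>R x + (1 - \<theta>) *\<^sub>R y - u = \<theta> *\<^sub>R (x - u) + (1 - \<theta>) *\<^sub>R (y - u)"
    by (simp add: algebra_simps)
  hence "norm (\<theta> *\<^sub>R x + (1 - \<theta>) *\<^sub>R y - u)^2
      = \<theta> * norm (x - u)^2 + (1 - \<theta>) * norm (y - u)^2 - \<theta> * (1 - \<theta>) * norm (x - y)^2"
    unfolding power2_norm_eq_inner
    by (simp add: inner_add_left inner_add_right inner_diff_left inner_diff_right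
        inner_commute algebra_simps)
  thus "ereal (norm (\<theta> *\<^sub>R x + (1 - \<theta>) *\<^sub>R y - u)^2 / 2)
      \<le> ereal \<theta> * ereal (norm (x - u)^2 / 2) + ereal (1 - \<theta>) * ereal (norm (y - u)^2 / 2)
        - ereal (1 / 2 * \<theta> * (1 - \<theta>) * norm (x - y)^2)"
    by (simp add: field_simps)
qed

lemma strongly_convex_ereal_inner:
  fixes p :: "'a::real_inner"
  shows "strongly_convex_ereal 0 (\<lambda>v. ereal (inner p v))"
  unfolding strongly_convex_ereal_def by (simp add: inner_add_right)

lemma closed_epigraph_scale_add:
  fixes g :: "'a::topological_space \<Rightarrow> ereal"
  assumes cl: "closed_proper_fun g" and c: "c > 0" and q: "continuous_on UNIV q"
  shows "closed {(w, t::real). ereal c * g w + ereal (q w) \<le> ereal t}"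
proof -
  have notm: "g w \<noteq> -\<infinity>" for w using cl unfolding closed_proper_fun_def by auto
  have iff: "ereal c * g w + ereal (q w) \<le> ereal t \<longleftrightarrow> g w \<le> ereal ((t - q w) / c)" for w t
    using c notm[of w] by (cases "g w") (auto simp: pos_le_divide_eq algebra_simps)
  have "{(w, t). ereal c * g w + ereal (q w) \<le> ereal t}
      = (\<lambda>z. (fst z, (snd z - q (fst z)) / c)) -` {(x, t). g x \<le> ereal t}"
    by (auto simp: iff)
  also have "closed \<dots>"
    using cl c unfolding closed_proper_fun_def
    by (intro closed_vimage) (auto intro!: continuous_intros continuous_on_compose2[OF q])
  finally show ?thesis .
qed

lemma quadratic_le_linear_bound:
  fixes r a b :: real
  assumes "r \<ge> 0" "a \<ge> 0" "r^2 / 2 \<le> a * r + b"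
  shows "r \<le> max 1 (2 * (a + \<bar>b\<bar>))"
proof (cases "r \<le> 1")
  case False
  have "b \<le> \<bar>b\<bar> * r" using False by (smt (verit) abs_ge_self mult_le_cancel_left1)
  hence "r^2 / 2 \<le> (a + \<bar>b\<bar>) * r" using assms by (simp add: algebra_simps)
  hence "r / 2 \<le> a + \<bar>b\<bar>" using False by (simp add: power2_eq_square)
  thus ?thesis by simp
qed simp

lemma closed_epigraph_attains_min:
  fixes \<phi> :: "'a::topological_space \<Rightarrow> ereal"
  assumes closed: "closed {(w, t::real). \<phi> w \<le> ereal t}" and K: "compact K"
    and t1: "\<phi> x1 = ereal t1" and sublevel: "\<And>w. \<phi> w \<le> ereal t1 \<Longrightarrow> w \<in> K \<and> ereal lo \<le> \<phi> w"
  obtains v where "\<And>w. \<phi> v \<le> \<phi> w"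
proof -
  define C where "C = {(w, t). \<phi> w \<le> ereal t} \<inter> (K \<times> {lo..t1})"
  have "compact C" unfolding C_def by (intro closed_Int_compact closed compact_Times K compact_Icc)
  moreover have "(x1, t1) \<in> C" using sublevel[of x1] t1 by (auto simp: C_def)
  ultimately obtain v tv where vC: "(v, tv) \<in> C" and least: "\<And>w t. (w, t) \<in> C \<Longrightarrow> tv \<le> t"
    using continuous_attains_inf[of C snd] by (force intro: continuous_intros)
  have "\<phi> v \<le> ereal tv" and "tv \<le> t1" using vC by (auto simp: C_def)
  have "ereal tv \<le> \<phi> w" for w
  proof (cases "\<phi> w \<le> ereal t1")
    case True
    then obtain tw where tw: "\<phi> w = ereal tw" using sublevel[of w] by (cases "\<phi> w") auto
    hence "(w, tw) \<in> C" using True sublevel[of w] by (auto simp: C_def)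
    thus ?thesis using least tw by simp
  next
    case False
    thus ?thesis using \<open>tv \<le> t1\<close> by (metis ereal_less_eq(3) linear order_trans)
  qed
  thus thesis using that order_trans[OF \<open>\<phi> v \<le> ereal tv\<close>] by blast
qed

lemma closed_proper_fun_prox_argmin_exists:
  fixes g :: "'a::{real_inner,heine_borel} \<Rightarrow> ereal"
  assumes cl: "closed_proper_fun g" and c: "c > 0" and lb: "\<And>x. ereal (a0 + inner p x) \<le> g x"
  shows "\<exists>v. \<forall>w. ereal c * g v + ereal (norm (v - u)^2 / 2)
                 \<le> ereal c * g w + ereal (norm (w - u)^2 / 2)"
proof -
  define \<phi> where "\<phi> w = ereal c * g w + ereal (norm (w - u)^2 / 2)" for w
  define a where "a = c * (a0 + inner p u)"
  define m where "m w = a - c * norm p * norm (w - u) + norm (w - u)^2 / 2" for w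
  have \<phi>_ge: "ereal (m w) \<le> \<phi> w" for w
  proof -
    have "- (norm p * norm (w - u)) \<le> inner p (w - u)"
      using Cauchy_Schwarz_ineq2[of p "w - u"] by linarith
    hence "c * inner p u \<le> c * (inner p w + norm p * norm (w - u))"
      using c by (intro mult_left_mono) (auto simp: inner_diff_right)
    hence "ereal (a - c * norm p * norm (w - u)) \<le> ereal (c * (a0 + inner p w))"
      unfolding a_def by (simp add: algebra_simps)
    also have "ereal (c * (a0 + inner p w)) \<le> ereal c * g w"
      using ereal_mult_left_mono[OF lb[of w], of "ereal c"] c by simp
    finally have "ereal (a - c * norm p * norm (w - u)) + ereal (norm (w - u)^2 / 2) \<le> \<phi> w"
      unfolding \<phi>_def by (rule add_right_mono)
    thus ?thesis unfolding m_def by simp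
  qed
  obtain x1 t1 where t1: "\<phi> x1 = ereal t1"
  proof -
    obtain x1 where "g x1 < \<infinity>" "g x1 \<noteq> -\<infinity>" using cl unfolding closed_proper_fun_def by auto
    then obtain r where "g x1 = ereal r" by (cases "g x1") auto
    thus thesis using that[of x1 "c * r + norm (x1 - u)^2 / 2"] unfolding \<phi>_def by simp
  qed
  define r where "r = max 1 (2 * (c * norm p + \<bar>t1 - a\<bar>))"
  have "w \<in> cball u r \<and> ereal (a - c * norm p * r) \<le> \<phi> w" if "\<phi> w \<le> ereal t1" for w
  proof
    have "m w \<le> t1" using order_trans[OF \<phi>_ge that] by simp
    hence "norm (w - u)^2 / 2 \<le> (c * norm p) * norm (w - u) + (t1 - a)" unfolding m_def by simp
    hence "norm (w - u) \<le> r" unfolding r_def by (intro quadratic_le_linear_bound) (use c in auto)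
    thus "w \<in> cball u r" by (simp add: dist_norm norm_minus_commute)
    have "c * norm p * norm (w - u) \<le> c * norm p * r"
      using \<open>norm (w - u) \<le> r\<close> c by (intro mult_left_mono) auto
    hence "a - c * norm p * r \<le> m w" unfolding m_def using zero_le_power2[of "norm (w - u)"] by linarith
    thus "ereal (a - c * norm p * r) \<le> \<phi> w" using \<phi>_ge[of w] by (metis ereal_less_eq(3) order_trans)
  qed
  moreover have "closed {(w, t::real). \<phi> w \<le> ereal t}"
    unfolding \<phi>_def by (intro closed_epigraph_scale_add cl c continuous_intros) auto
  ultimately obtain v where "\<And>w. \<phi> v \<le> \<phi> w"
    using closed_epigraph_attains_min[of \<phi> "cball u r" x1 t1, OF _ compact_cball t1] by blast
  thus ?thesis unfolding \<phi>_def by blast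
qed

lemma prox_minimal:
  assumes "\<exists>v. \<forall>w. h v + ereal (norm (v - u)^2 / 2) \<le> h w + ereal (norm (w - u)^2 / 2)"
  shows "h (prox h u) + ereal (norm (prox h u - u)^2 / 2) \<le> h w + ereal (norm (w - u)^2 / 2)"
  using someI_ex[OF assms] unfolding prox_def by blast

lemma prox_eqI:
  fixes h :: "'a::real_normed_vector \<Rightarrow> ereal"
  assumes fin: "\<bar>h v\<bar> \<noteq> \<infinity>"
    and growth: "\<And>w. h v + ereal (norm (v - u)^2 / 2 + norm (w - v)^2 / 2)
                        \<le> h w + ereal (norm (w - u)^2 / 2)"
  shows "prox h u = v"
proof -
  obtain hv where hv: "h v = ereal hv" using fin by auto
  have "h v + ereal (norm (v - u)^2 / 2) \<le> h w + ereal (norm (w - u)^2 / 2)" for w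
    using growth[of w] hv by (simp add: order_trans[rotated])
  hence prox_min:
    "h (prox h u) + ereal (norm (prox h u - u)^2 / 2) \<le> h v + ereal (norm (v - u)^2 / 2)"
    by (intro prox_minimal) blast
  have "ereal (hv + (norm (v - u)^2 / 2 + norm (prox h u - v)^2 / 2))
      \<le> h (prox h u) + ereal (norm (prox h u - u)^2 / 2)"
    using growth[of "prox h u"] hv by simp
  also have "\<dots> \<le> ereal (hv + norm (v - u)^2 / 2)" using prox_min hv by simp
  finally have "norm (prox h u - v)^2 \<le> 0" by simp
  thus ?thesis by simp
qed

lemma prox_strongly_convex:
  fixes g :: "'a::{real_inner,heine_borel} \<Rightarrow> ereal" and u :: 'a
  assumes cl: "closed_proper_fun g" and sc: "strongly_convex_ereal \<mu> g" and c: "c > 0"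
    and lb: "\<And>x. ereal (a0 + inner p x) \<le> g x"
  defines "v \<equiv> prox (\<lambda>x. ereal c * g x) u"
  shows prox_strongly_convex_finite: "g v < \<infinity>"
    and prox_strongly_convex_growth: "g w < \<infinity> \<Longrightarrow>
      c * real_of_ereal (g v) + norm (v - u)^2 / 2 + (c * \<mu> + 1) / 2 * norm (w - v)^2
        \<le> c * real_of_ereal (g w) + norm (w - u)^2 / 2"
proof -
  have notm: "g x \<noteq> -\<infinity>" for x using cl unfolding closed_proper_fun_def by auto
  define h where "h x = ereal c * g x + ereal (norm (x - u)^2 / 2)" for x
  have hmin: "h v \<le> h w" for w
    unfolding h_def v_def by (rule prox_minimal) (rule closed_proper_fun_prox_argmin_exists[OF cl c lb])
  have hsc: "strongly_convex_ereal (c * \<mu> + 1) h"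
    unfolding h_def
    by (intro strongly_convex_ereal_scale_add sc notm c strongly_convex_ereal_half_norm_sq)
  obtain x1 where "g x1 < \<infinity>" using cl unfolding closed_proper_fun_def by auto
  hence "h v < \<infinity>" using hmin[of x1] notm[of x1] c by (cases "g x1") (auto simp: h_def)
  thus gv: "g v < \<infinity>" using c by (auto simp: h_def)
  assume "g w < \<infinity>"
  moreover have "h v + ereal ((c * \<mu> + 1) / 2 * norm (w - v)^2) \<le> h w"
    by (rule strongly_convex_ereal_argmin_growth[OF hsc hmin])
  ultimately show "c * real_of_ereal (g v) + norm (v - u)^2 / 2 + (c * \<mu> + 1) / 2 * norm (w - v)^2
      \<le> c * real_of_ereal (g w) + norm (w - u)^2 / 2"
    using gv notm[of v] notm[of w] unfolding h_def
    by (cases "g v"; cases "g w") auto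
qed

section \<open>Smooth convex functions and their conjugates\<close>

lemma smooth_with_has_real_derivative:
  "smooth_with L f \<Longrightarrow> (f has_real_derivative deriv f x) (at x)"
  unfolding smooth_with_def using DERIV_deriv_iff_real_differentiable by blast

lemma smooth_with_continuous_deriv:
  "smooth_with L f \<Longrightarrow> L \<ge> 0 \<Longrightarrow> continuous_on UNIV (deriv f)"
  unfolding smooth_with_def
  by (intro lipschitz_on_continuous_on[of L]) (auto simp: lipschitz_on_def dist_real_def)

lemma convex_smooth_tangent_le:
  assumes "convex_on UNIV f" and "smooth_with L f"
  shows "f x + deriv f x * (y - x) \<le> f y"
  using convex_on_imp_above_tangent[OF assms(1) _ _ _ smooth_with_has_real_derivative[OF assms(2)]]
  by (simp add: algebra_simps)

lemma convex_smooth_deriv_mono: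
  assumes "convex_on UNIV f" and "smooth_with L f" and "x \<le> y"
  shows "deriv f x \<le> deriv f y"
proof -
  have "f x + deriv f x * (y - x) \<le> f y" "f y + deriv f y * (x - y) \<le> f x"
    using convex_smooth_tangent_le[OF assms(1,2)] by auto
  hence "0 \<le> (deriv f y - deriv f x) * (y - x)" by (simp add: algebra_simps)
  thus ?thesis using \<open>x \<le> y\<close> by (cases "x = y") (auto simp: zero_le_mult_iff)
qed

lemma smooth_with_descent:
  assumes sm: "smooth_with L f"
  shows "f y \<le> f x + deriv f x * (y - x) + L / 2 * (y - x)^2"
proof -
  define h where "h = y - x"
  define \<phi> where "\<phi> t = f (x + t * h) - t * deriv f x * h - L / 2 * t^2 * h^2" for t
  have "\<exists>d. (\<phi> has_real_derivative d) (at t) \<and> d \<le> 0" if "0 \<le> t" for t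
  proof (intro exI conjI)
    show "(\<phi> has_real_derivative deriv f (x + t * h) * h - deriv f x * h - L * t * h^2) (at t)"
      unfolding \<phi>_def
      by (rule derivative_eq_intros DERIV_chain2[OF smooth_with_has_real_derivative[OF sm]] | simp)+
    have "(deriv f (x + t * h) - deriv f x) * h \<le> \<bar>deriv f (x + t * h) - deriv f x\<bar> * \<bar>h\<bar>"
      by (metis abs_ge_self abs_mult)
    also have "\<dots> \<le> L * \<bar>(x + t * h) - x\<bar> * \<bar>h\<bar>"
      using sm unfolding smooth_with_def by (intro mult_right_mono) (blast, simp)
    also have "\<dots> = L * t * h^2" using that by (simp add: abs_mult power2_eq_square)
    finally show "deriv f (x + t * h) * h - deriv f x * h - L * t * h^2 \<le> 0"
      by (simp add: algebra_simps)
  qed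
  hence "\<phi> 1 \<le> \<phi> 0" using DERIV_nonpos_imp_nonincreasing[of 0 1 \<phi>] by simp
  thus ?thesis unfolding \<phi>_def h_def by simp
qed

lemma conj_fun_neq_MInfty: "conj_fun f s \<noteq> -\<infinity>"
proof -
  have "ereal (s * 0 - f 0) \<le> conj_fun f s" unfolding conj_fun_def by (rule SUP_upper) simp
  thus ?thesis by auto
qed

lemma conj_fun_deriv:
  assumes "convex_on UNIV f" and "smooth_with L f"
  shows "conj_fun f (deriv f z) = ereal (deriv f z * z - f z)"
  unfolding conj_fun_def
proof (rule antisym)
  show "(SUP x. ereal (deriv f z * x - f x)) \<le> ereal (deriv f z * z - f z)"
    using convex_smooth_tangent_le[OF assms, of z] by (intro SUP_least) (simp add: algebra_simps)
qed (rule SUP_upper, simp)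

lemma conj_fun_ge_smooth:
  assumes sm: "smooth_with (1 / \<gamma>) f" and \<gamma>: "\<gamma> > 0"
  shows "ereal (w * z - f z + \<gamma> / 2 * (w - deriv f z)^2) \<le> conj_fun f w"
proof -
  define x where "x = z + \<gamma> * (w - deriv f z)"
  have "f x \<le> f z + deriv f z * (x - z) + (1 / \<gamma>) / 2 * (x - z)^2"
    by (rule smooth_with_descent[OF sm])
  moreover have "(1 / \<gamma>) / 2 * (x - z)^2 = \<gamma> / 2 * (w - deriv f z)^2"
    unfolding x_def using \<gamma> by (simp add: power2_eq_square field_simps)
  moreover have "w * x - deriv f z * (x - z) = w * z + \<gamma> * (w - deriv f z)^2"
    unfolding x_def by (simp add: power2_eq_square algebra_simps)
  ultimately have "w * z - f z + \<gamma> / 2 * (w - deriv f z)^2 \<le> w * x - f x" by linarith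
  also have "ereal (w * x - f x) \<le> conj_fun f w" unfolding conj_fun_def by (rule SUP_upper) simp
  finally show ?thesis by simp
qed

lemma deriv_add_linear_surj:
  assumes cv: "convex_on UNIV f" and sm: "smooth_with L f" and L: "L \<ge> 0" and \<tau>: "\<tau> > 0"
  obtains z where "deriv f z + \<tau> * z = u"
proof -
  define \<phi> where "\<phi> z = deriv f z + \<tau> * z" for z
  define a where "a = min 0 ((u - deriv f 0) / \<tau>)"
  define b where "b = max 0 ((u - deriv f 0) / \<tau>)"
  have "deriv f a \<le> deriv f 0" "deriv f 0 \<le> deriv f b"
    by (intro convex_smooth_deriv_mono[OF cv sm]; simp add: a_def b_def)+
  moreover have "\<tau> * a \<le> u - deriv f 0" "u - deriv f 0 \<le> \<tau> * b"
    using \<tau> by (auto simp: a_def b_def min_def max_def field_simps)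
  ultimately have "\<phi> a \<le> u" "u \<le> \<phi> b" unfolding \<phi>_def by linarith+
  moreover have "continuous_on {a..b} \<phi>"
    unfolding \<phi>_def
    by (intro continuous_intros continuous_on_subset[OF smooth_with_continuous_deriv[OF sm L]]) simp
  ultimately obtain z where "\<phi> z = u"
    using IVT'[of \<phi> a u b] by (force simp: a_def b_def)
  thus thesis using that unfolding \<phi>_def by blast
qed

lemma prox_conj_fun:
  assumes cv: "convex_on UNIV f" and sm: "smooth_with (1 / \<gamma>) f" and \<gamma>: "\<gamma> > 0" and \<tau>: "\<tau> > 0"
  shows "prox (\<lambda>v. ereal \<tau> * conj_fun f v) (deriv f z + \<tau> * z) = deriv f z"
proof (rule prox_eqI)
  define v where "v = deriv f z"
  define u where "u = deriv f z + \<tau> * z"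
  have cv0: "conj_fun f v = ereal (v * z - f z)" unfolding v_def by (rule conj_fun_deriv[OF cv sm])
  thus "\<bar>ereal \<tau> * conj_fun f v\<bar> \<noteq> \<infinity>" by simp
  fix w
  show "ereal \<tau> * conj_fun f v + ereal (norm (v - u)^2 / 2 + norm (w - v)^2 / 2)
      \<le> ereal \<tau> * conj_fun f w + ereal (norm (w - u)^2 / 2)"
  proof (cases "conj_fun f w")
    case (real Cw)
    have "w * z - f z + \<gamma> / 2 * (w - v)^2 \<le> Cw"
      using conj_fun_ge_smooth[OF sm \<gamma>, of w z] real unfolding v_def by simp
    hence "\<tau> * (w * z - f z) \<le> \<tau> * Cw"
      using \<tau> \<gamma> by (intro mult_left_mono) (auto intro: order_trans[rotated] simp: add_increasing2)
    moreover have "(w - u)^2 = (w - v)^2 - 2 * \<tau> * z * (w - v) + (v - u)^2"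
      unfolding u_def v_def by (simp add: power2_eq_square algebra_simps)
    ultimately show ?thesis using real cv0 by (simp add: algebra_simps)
  next
    case PInf thus ?thesis using \<tau> cv0 by simp
  next
    case MInf thus ?thesis using conj_fun_neq_MInfty by blast
  qed
qed

section \<open>Averages and elementary inequalities\<close>

lemma expect_idx_mono:
  "(\<And>I. h I \<le> h' I) \<Longrightarrow> expect_idx T h \<le> expect_idx T (h' :: (nat \<Rightarrow> 'n::finite) \<Rightarrow> real)"
  unfolding expect_idx_def by (intro divide_right_mono sum_mono) auto

lemma expect_idx_const: "expect_idx T (\<lambda>I::nat \<Rightarrow> 'n::finite. c) = c"
  using card_lists_length_eq[of "UNIV :: 'n set" T] unfolding expect_idx_def by simp

lemma expect_idx_cmult: "expect_idx T (\<lambda>I::nat \<Rightarrow> 'n::finite. c * h I) = c * expect_idx T h"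
  unfolding expect_idx_def by (simp add: sum_distrib_left)

lemma expect_idx_Suc:
  fixes h :: "(nat \<Rightarrow> 'n::finite) \<Rightarrow> real"
  assumes dep: "\<And>I I'. (\<And>k. k \<le> T \<Longrightarrow> I k = I' k) \<Longrightarrow> h I = h I'"
  shows "expect_idx (Suc T) h = expect_idx T (\<lambda>I. (\<Sum>i\<in>UNIV. h (I(T := i))) / real CARD('n))"
proof -
  have split:
    "{xs::'n list. length xs = Suc T} = (\<lambda>(ys, i). ys @ [i]) ` ({ys. length ys = T} \<times> UNIV)"
  proof (intro set_eqI iffI)
    fix xs :: "'n list" assume "xs \<in> {xs. length xs = Suc T}"
    hence "xs = butlast xs @ [last xs]" "length (butlast xs) = T"
      by (auto intro: append_butlast_last_id[symmetric])
    thus "xs \<in> (\<lambda>(ys, i). ys @ [i]) ` ({ys. length ys = T} \<times> UNIV)" by force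
  qed auto
  have inj: "inj_on (\<lambda>(ys, i). ys @ [i]) ({ys::'n list. length ys = T} \<times> UNIV)"
    by (auto simp: inj_on_def)
  have "h (\<lambda>k. (ys @ [i]) ! k) = h ((\<lambda>k. ys ! k)(T := i))" if "length ys = T" for ys i
    by (rule dep) (use that in \<open>auto simp: nth_append\<close>)
  hence "(\<Sum>xs\<in>{xs::'n list. length xs = Suc T}. h (\<lambda>k. xs ! k))
      = (\<Sum>ys\<in>{ys::'n list. length ys = T}. \<Sum>i\<in>UNIV. h ((\<lambda>k. ys ! k)(T := i)))"
    unfolding split sum.reindex[OF inj] sum.cartesian_product by (intro sum.cong) auto
  thus ?thesis unfolding expect_idx_def
    by (simp add: sum_divide_distrib[symmetric] field_simps)
qed

lemma norm_weighted_mean_diff_sq_le: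
  fixes v :: "nat \<Rightarrow> 'a::real_inner"
  assumes w: "\<And>t. w t \<ge> 0" and W: "(\<Sum>t<T. w t) > 0"
  shows "norm ((1 / (\<Sum>t<T. w t)) *\<^sub>R (\<Sum>t<T. w t *\<^sub>R v t) - c)^2
     \<le> (1 / (\<Sum>t<T. w t)) * (\<Sum>t<T. w t * norm (v t - c)^2)"
proof -
  define W where "W = (\<Sum>t<T. w t)"
  have "(\<Sum>t<T. w t *\<^sub>R (v t - c)) = (\<Sum>t<T. w t *\<^sub>R v t) - W *\<^sub>R c"
    unfolding W_def by (simp add: scaleR_diff_right sum_subtractf scaleR_sum_left)
  hence centre: "(1 / W) *\<^sub>R (\<Sum>t<T. w t *\<^sub>R v t) - c = (1 / W) *\<^sub>R (\<Sum>t<T. w t *\<^sub>R (v t - c))"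
    using W by (simp add: W_def scaleR_diff_right)
  have "norm (\<Sum>t<T. w t *\<^sub>R (v t - c)) \<le> (\<Sum>t<T. sqrt (w t) * (sqrt (w t) * norm (v t - c)))"
    using norm_sum[of "\<lambda>t. w t *\<^sub>R (v t - c)" "{..<T}"] w
    by (simp add: abs_of_nonneg mult.assoc[symmetric])
  hence "norm (\<Sum>t<T. w t *\<^sub>R (v t - c))^2
      \<le> (\<Sum>t<T. sqrt (w t) * (sqrt (w t) * norm (v t - c)))^2"
    by (intro power_mono) auto
  also have "\<dots> \<le> (\<Sum>t<T. sqrt (w t)^2) * (\<Sum>t<T. (sqrt (w t) * norm (v t - c))^2)"
    by (rule Cauchy_Schwarz_ineq_sum)
  also have "\<dots> = W * (\<Sum>t<T. w t * norm (v t - c)^2)"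
    unfolding W_def using w by (simp add: power_mult_distrib)
  finally have "norm (\<Sum>t<T. w t *\<^sub>R (v t - c))^2 \<le> W * (\<Sum>t<T. w t * norm (v t - c)^2)" .
  hence "(1 / W)^2 * norm (\<Sum>t<T. w t *\<^sub>R (v t - c))^2
      \<le> (1 / W)^2 * (W * (\<Sum>t<T. w t * norm (v t - c)^2))"
    by (intro mult_left_mono) auto
  thus ?thesis
    unfolding W_def[symmetric] centre using W
    by (simp add: W_def power2_eq_square power_mult_distrib field_simps)
qed

lemma norm_sq_shift:
  fixes w x s :: "'a::real_inner"
  shows "norm (w - (x - s))^2 / 2 = norm (w - x)^2 / 2 + inner s w - inner s x + norm s^2 / 2"
proof -
  have "w - (x - s) = (w - x) + s" by simp
  thus ?thesis unfolding power2_norm_eq_inner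
    by (simp add: inner_add_left inner_add_right inner_diff_left inner_diff_right inner_commute
        field_simps)
qed

lemma neg_mult_le_young:
  fixes e \<eta> \<tau> R q r \<delta> :: real
  assumes e: "e \<ge> 0" and \<eta>: "\<eta> > 0" and \<tau>: "\<tau> > 0" and step: "\<eta> * \<tau> * R^2 \<le> 1"
    and q: "\<bar>q\<bar> \<le> R * r"
  shows "- (\<eta> * e * \<delta> * q) \<le> e / 2 * r^2 + \<eta> * e / (2 * \<tau>) * \<delta>^2"
proof -
  have "- (\<eta> * e * \<delta> * q) \<le> \<bar>\<eta> * e * \<delta> * q\<bar>" by (rule abs_ge_minus_self)
  also have "\<dots> = e * ((\<eta> * \<bar>\<delta>\<bar>) * \<bar>q\<bar>)" using e \<eta> by (simp add: abs_mult mult_ac)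
  also have "\<dots> \<le> e * ((\<eta> * \<bar>\<delta>\<bar>) * (R * r))"
    using e \<eta> q by (intro mult_left_mono) auto
  also have "\<dots> \<le> e * (((\<eta> * \<bar>\<delta>\<bar> * R)^2 + r^2) / 2)"
  proof -
    have "(\<eta> * \<bar>\<delta>\<bar>) * (R * r) \<le> ((\<eta> * \<bar>\<delta>\<bar> * R)^2 + r^2) / 2"
      using sum_squares_bound[of "\<eta> * \<bar>\<delta>\<bar> * R" r] by (simp add: mult_ac)
    thus ?thesis using e by (rule mult_left_mono)
  qed
  also have "\<dots> = e / 2 * r^2 + (\<eta> * e * \<delta>^2 / 2) * (\<eta> * R^2)"
    by (simp add: power2_eq_square algebra_simps)
  also have "\<dots> \<le> e / 2 * r^2 + (\<eta> * e * \<delta>^2 / 2) * (1 / \<tau>)"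
    using step \<tau> e \<eta> by (intro add_left_mono mult_left_mono) (auto simp: field_simps)
  finally show ?thesis by (simp add: field_simps)
qed

lemma inner_matrix_vector_mult_rows:
  "inner (y::real^'n) ((A::real^'d^'n) *v x) = (\<Sum>j\<in>UNIV. y $ j * inner (A $ j) x)"
  by (simp add: inner_vec_def matrix_vector_mult_def sum_distrib_left)

lemma inner_transpose_matrix_vector_mult_rows:
  "inner (transpose (A::real^'d^'n) *v (y::real^'n)) x = (\<Sum>j\<in>UNIV. y $ j * inner (A $ j) x)"
  by (simp add: inner_vec_def matrix_vector_mult_def transpose_def sum_distrib_left
      sum_distrib_right
      mult_ac sum.swap[of _ "UNIV::'d set"])

lemma norm_sq_vec_sum: "norm (v :: real^'n)^2 = (\<Sum>j\<in>UNIV. (v $ j)^2)"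
  unfolding power2_norm_eq_inner inner_vec_def by (simp add: power2_eq_square)

lemma sum_if_eq:
  "(\<Sum>j\<in>(UNIV::'n::finite set). if j = i then a else b j) = (\<Sum>j\<in>UNIV. b j) + a - (b i :: real)"
  by (simp add: sum.If_cases[of UNIV "\<lambda>j. j = i"] sum.remove[of UNIV i] Compl_eq_Diff_UNIV
      flip: Collect_neg_eq)

section \<open>The Lyapunov argument for SDAPD\<close>

text \<open>Only these inequalities between the step sizes enter the argument.\<close>
locale sdapd_setting =
  fixes A :: "real^'d^'n::finite" and f :: "'n \<Rightarrow> real \<Rightarrow> real" and g :: "real^'d \<Rightarrow> ereal"
    and \<gamma> \<mu> \<eta> \<tau> \<xi> R :: real and \<beta> :: "nat \<Rightarrow> real"
    and x0 xs :: "real^'d" and y0 ys :: "real^'n"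
  assumes gamma_pos: "\<gamma> > 0" and mu_pos: "\<mu> > 0" and eta_pos: "\<eta> > 0" and tau_pos: "\<tau> > 0"
    and xi_ge_1: "\<xi> \<ge> 1"
    and row_norm_le: "\<And>i. norm (A $ i) \<le> R"
    and step_product_le: "\<eta> * \<tau> * R^2 \<le> 1"
    and xi_primal: "\<xi> - 1 \<le> \<mu> * \<eta>"
    and xi_dual: "\<xi> * (1 + \<tau> * \<gamma> * (real CARD('n) - 1) / real CARD('n)) \<le> 1 + \<tau> * \<gamma>"
    and beta_eq: "\<beta> = (\<lambda>t. \<eta> * \<xi> ^ t)"
    and convex_f: "\<And>i. convex_on UNIV (f i)"
    and smooth_f: "\<And>i. smooth_with (1 / \<gamma>) (f i)"
    and closed_g: "closed_proper_fun g"
    and strongly_convex_g: "strongly_convex_ereal \<mu> g"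
    and saddle: "is_saddle A f g xs ys"
begin

definition xt :: "(nat \<Rightarrow> 'n) \<Rightarrow> nat \<Rightarrow> real^'d" where
  "xt I t = fst (sdapd_state A f g \<eta> \<tau> \<beta> x0 y0 I t)"

definition yt :: "(nat \<Rightarrow> 'n) \<Rightarrow> nat \<Rightarrow> real^'n" where
  "yt I t = fst (snd (sdapd_state A f g \<eta> \<tau> \<beta> x0 y0 I t))"

definition st :: "(nat \<Rightarrow> 'n) \<Rightarrow> nat \<Rightarrow> real^'d" where
  "st I t = snd (snd (sdapd_state A f g \<eta> \<tau> \<beta> x0 y0 I t))"

definition xbar :: "(nat \<Rightarrow> 'n) \<Rightarrow> nat \<Rightarrow> real^'d" where
  "xbar I t = sdapd_xbar A f g \<eta> \<tau> \<beta> x0 y0 I t"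

text \<open>The value coordinate i of y^{t+1} receives when i_t = i.\<close>
definition ynext :: "(nat \<Rightarrow> 'n) \<Rightarrow> nat \<Rightarrow> 'n \<Rightarrow> real" where
  "ynext I t i =
    prox (\<lambda>v. ereal \<tau> * conj_fun (f i) v) (yt I t $ i + \<tau> * inner (A $ i) (xbar I t))"

definition coupling_grad :: "real^'n \<Rightarrow> real^'d" where
  "coupling_grad y = (1 / real CARD('n)) *\<^sub>R (transpose A *v y)"

lemma card_pos: "real CARD('n) > 0"
  by simp

lemma sdapd_state_eq: "sdapd_state A f g \<eta> \<tau> \<beta> x0 y0 I t = (xt I t, yt I t, st I t)"
  unfolding xt_def yt_def st_def by simp

lemma xt_0: "xt I 0 = x0" and yt_0: "yt I 0 = y0" and st_0: "st I 0 = 0"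
  unfolding xt_def yt_def st_def by simp_all

lemma xbar_eq:
  "xbar I t = prox (\<lambda>v. ereal \<eta> * g v) (xt I t - (\<eta> / real CARD('n)) *\<^sub>R (transpose A *v yt I t))"
  unfolding xbar_def sdapd_xbar_def sdapd_state_eq by (simp del: transpose_matrix_vector)

lemma yt_Suc: "yt I (Suc t) = (\<chi> j. if j = I t then ynext I t (I t) else yt I t $ j)"
  unfolding yt_def[of I "Suc t"] ynext_def xbar_eq
  by (simp add: sdapd_state_eq Let_def del: transpose_matrix_vector)

lemma st_Suc: "st I (Suc t) = st I t + (\<beta> t / real CARD('n)) *\<^sub>R
    (transpose A *v (yt I t + real CARD('n) *\<^sub>R (yt I (Suc t) - yt I t)))"
  unfolding st_def[of I "Suc t"] yt_Suc ynext_def xbar_eq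
  by (simp add: sdapd_state_eq Let_def del: transpose_matrix_vector)

lemma xt_Suc: "xt I (Suc t) = prox (\<lambda>v. ereal (Bsum \<beta> t) * g v) (x0 - st I (Suc t))"
  unfolding xt_def[of I "Suc t"] st_Suc yt_Suc ynext_def xbar_eq
  by (simp add: sdapd_state_eq Let_def del: transpose_matrix_vector)

lemma sdapd_state_prefix:
  "(\<And>k. k < t \<Longrightarrow> I k = I' k) \<Longrightarrow>
    sdapd_state A f g \<eta> \<tau> \<beta> x0 y0 I t = sdapd_state A f g \<eta> \<tau> \<beta> x0 y0 I' t"
  by (induction t) (auto simp: Let_def split: prod.splits)

lemma iterates_prefix:
  assumes "\<And>k. k < t \<Longrightarrow> I k = I' k"
  shows "xt I t = xt I' t" "yt I t = yt I' t" "st I t = st I' t" "xbar I t = xbar I' t"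
    "ynext I t i = ynext I' t i"
proof -
  have "sdapd_state A f g \<eta> \<tau> \<beta> x0 y0 I t = sdapd_state A f g \<eta> \<tau> \<beta> x0 y0 I' t"
    by (rule sdapd_state_prefix) (use assms in auto)
  thus x: "xt I t = xt I' t" and y: "yt I t = yt I' t" and "st I t = st I' t"
    by (simp_all add: sdapd_state_eq)
  show xb: "xbar I t = xbar I' t" unfolding xbar_eq x y ..
  show "ynext I t i = ynext I' t i" unfolding ynext_def xb y ..
qed

lemma iterates_fun_upd:
  "xt (I(t := j)) t = xt I t" "yt (I(t := j)) t = yt I t" "st (I(t := j)) t = st I t"
  "xbar (I(t := j)) t = xbar I t" "ynext (I(t := j)) t i = ynext I t i"
  by (rule iterates_prefix; simp)+

definition g_real :: "real^'d \<Rightarrow> real" where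
  "g_real x = real_of_ereal (g x)"

definition conj_ys :: "'n \<Rightarrow> real" where
  "conj_ys i = real_of_ereal (conj_fun (f i) (ys $ i))"

lemma g_neq_MInfty: "g x \<noteq> -\<infinity>"
  using closed_g unfolding closed_proper_fun_def by auto

lemma g_ereal: "g x < \<infinity> \<Longrightarrow> g x = ereal (g_real x)"
  unfolding g_real_def using g_neq_MInfty[of x] by (cases "g x") auto

lemma g_xs_finite: "g xs < \<infinity>"
  using saddle unfolding is_saddle_def by auto

lemma conj_ys_ereal: "conj_fun (f i) (ys $ i) = ereal (conj_ys i)"
  using saddle conj_fun_neq_MInfty[of "f i" "ys $ i"] unfolding is_saddle_def conj_ys_def
  by (cases "conj_fun (f i) (ys $ i)") auto

lemma Ftil_eq:
  assumes "g x < \<infinity>" and "\<And>j. conj_fun (f j) (y $ j) = ereal (C j)"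
  shows "Ftil A f g x y
    = ereal (inner y (A *v x) / real CARD('n) + g_real x - (\<Sum>j\<in>UNIV. C j) / real CARD('n))"
  unfolding Ftil_def g_ereal[OF assms(1)] assms(2) by simp

lemma inner_coupling_grad:
  "inner (coupling_grad y) x = (\<Sum>j\<in>UNIV. y $ j * inner (A $ j) x) / real CARD('n)"
  unfolding coupling_grad_def
  by (simp add: inner_transpose_matrix_vector_mult_rows del: transpose_matrix_vector)

lemma primal_optimality:
  assumes "g x < \<infinity>"
  shows "g_real xs + inner (coupling_grad ys) xs \<le> g_real x + inner (coupling_grad ys) x"
proof -
  have "Ftil A f g xs ys \<le> Ftil A f g x ys" using saddle unfolding is_saddle_def by blast
  thus ?thesis
    by (simp add: Ftil_eq[OF g_xs_finite conj_ys_ereal] Ftil_eq[OF assms conj_ys_ereal]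
        inner_coupling_grad
        inner_matrix_vector_mult_rows divide_right_mono)
qed

lemma g_ge_affine:
  "ereal (g_real xs + inner (coupling_grad ys) xs + inner (- coupling_grad ys) x) \<le> g x"
  using primal_optimality[of x] g_ereal[of x] by (cases "g x < \<infinity>") auto

lemma primal_strong_growth:
  assumes "g x < \<infinity>"
  shows "\<mu> / 2 * norm (x - xs)^2 \<le> g_real x - g_real xs + inner (coupling_grad ys) (x - xs)"
proof -
  define h where "h z = ereal 1 * g z + ereal (inner (coupling_grad ys) z)" for z
  have "strongly_convex_ereal (1 * \<mu> + 0) h"
    unfolding h_def
    by (intro strongly_convex_ereal_scale_add strongly_convex_g g_neq_MInfty
        strongly_convex_ereal_inner) simp
  moreover have "h xs \<le> h z" for z
    using primal_optimality[of z] g_ereal[of z] g_ereal[OF g_xs_finite]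
    by (cases "g z < \<infinity>") (auto simp: h_def)
  ultimately have "h xs + ereal ((1 * \<mu> + 0) / 2 * norm (x - xs)^2) \<le> h x"
    by (rule strongly_convex_ereal_argmin_growth)
  thus ?thesis
    using g_ereal[OF assms] g_ereal[OF g_xs_finite] by (simp add: h_def inner_diff_right)
qed

lemma dual_optimality:
  assumes "conj_fun (f i) v = ereal Cv"
  shows "inner (A $ i) xs * (v - ys $ i) \<le> Cv - conj_ys i"
proof -
  define y where "y = (\<chi> j. if j = i then v else ys $ j)"
  have "conj_fun (f j) (y $ j) = ereal (if j = i then Cv else conj_ys j)" for j
    unfolding y_def using assms conj_ys_ereal by auto
  moreover have "Ftil A f g xs y \<le> Ftil A f g xs ys" using saddle unfolding is_saddle_def by blast
  ultimately have "inner y (A *v xs) - (\<Sum>j\<in>UNIV. if j = i then Cv else conj_ys j)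
      \<le> inner ys (A *v xs) - (\<Sum>j\<in>UNIV. conj_ys j)"
    using card_pos
    by (simp add: Ftil_eq[OF g_xs_finite] conj_ys_ereal divide_simps)
  moreover have "inner y (A *v xs)
      = (\<Sum>j\<in>UNIV. if j = i then v * inner (A $ i) xs else ys $ j * inner (A $ j) xs)"
    unfolding inner_matrix_vector_mult_rows y_def by (intro sum.cong) auto
  hence "inner y (A *v xs) = inner ys (A *v xs) + (v - ys $ i) * inner (A $ i) xs"
    by (simp add: sum_if_eq inner_matrix_vector_mult_rows algebra_simps)
  ultimately show ?thesis by (simp add: sum_if_eq algebra_simps)
qed

lemma prox_g_finite: "c > 0 \<Longrightarrow> g (prox (\<lambda>v. ereal c * g v) u) < \<infinity>"
  by (rule prox_strongly_convex_finite[OF closed_g strongly_convex_g _ g_ge_affine])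

lemma prox_g_growth:
  assumes "c > 0" and "g w < \<infinity>"
  shows "c * g_real (prox (\<lambda>v. ereal c * g v) u) + norm (prox (\<lambda>v. ereal c * g v) u - u)^2 / 2
      + (c * \<mu> + 1) / 2 * norm (w - prox (\<lambda>v. ereal c * g v) u)^2
    \<le> c * g_real w + norm (w - u)^2 / 2"
  using prox_strongly_convex_growth[OF closed_g strongly_convex_g assms(1) g_ge_affine assms(2)]
  unfolding g_real_def .

lemma xbar_finite: "g (xbar I t) < \<infinity>"
  unfolding xbar_eq using prox_g_finite[OF eta_pos] .

lemma xbar_growth:
  fixes I t
  assumes "g w < \<infinity>"
  defines "x \<equiv> xt I t" and "y \<equiv> yt I t" and "xb \<equiv> xbar I t"
  shows "\<eta> * (g_real xb + inner (coupling_grad y) xb) + norm (xb - x)^2 / 2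
      + (\<eta> * \<mu> + 1) / 2 * norm (w - xb)^2
    \<le> \<eta> * (g_real w + inner (coupling_grad y) w) + norm (w - x)^2 / 2"
proof -
  have "(\<eta> / real CARD('n)) *\<^sub>R (transpose A *v y) = \<eta> *\<^sub>R coupling_grad y"
    unfolding coupling_grad_def by simp
  hence "\<eta> * g_real xb + norm (xb - (x - \<eta> *\<^sub>R coupling_grad y))^2 / 2
      + (\<eta> * \<mu> + 1) / 2 * norm (w - xb)^2
      \<le> \<eta> * g_real w + norm (w - (x - \<eta> *\<^sub>R coupling_grad y))^2 / 2"
    using prox_g_growth[OF eta_pos assms(1)] unfolding xb_def xbar_eq x_def y_def by simp
  thus ?thesis unfolding norm_sq_shift by (simp add: algebra_simps)
qed

text \<open>B t is the paper's B_{t-1}; with this shift B 0 = 0 and no truncated subtraction occurs.\<close>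
definition B :: "nat \<Rightarrow> real" where
  "B t = (\<Sum>k<t. \<beta> k)"

lemma beta_pos: "\<beta> t > 0"
  using eta_pos xi_ge_1 unfolding beta_eq by simp

lemma Bsum_eq_B: "Bsum \<beta> t = B (Suc t)"
  unfolding Bsum_def B_def using lessThan_Suc_atMost by simp

lemma B_Suc: "B (Suc t) = B t + \<beta> t"
  unfolding B_def by simp

lemma B_nonneg: "B t \<ge> 0"
  unfolding B_def using beta_pos by (simp add: sum_nonneg less_imp_le)

lemma B_pos: "t > 0 \<Longrightarrow> B t > 0"
  by (cases t) (auto simp: B_Suc intro: add_nonneg_pos B_nonneg beta_pos)

lemma xi_power_le: "\<xi> ^ t \<le> 1 + \<mu> * B t"
proof (induction t)
  case (Suc t)
  have "\<xi> ^ Suc t = \<xi> ^ t + (\<xi> - 1) * \<xi> ^ t" by (simp add: algebra_simps)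
  also have "\<dots> \<le> \<xi> ^ t + (\<mu> * \<eta>) * \<xi> ^ t"
    using xi_primal xi_ge_1 by (intro add_left_mono mult_right_mono) auto
  also have "\<dots> \<le> 1 + \<mu> * B t + \<mu> * \<beta> t" using Suc by (simp add: beta_eq)
  finally show ?case by (simp add: B_Suc algebra_simps)
qed (simp add: B_def)

lemma B_geometric: "\<xi> > 1 \<Longrightarrow> B t = \<eta> * (\<xi> ^ t - 1) / (\<xi> - 1)"
  unfolding B_def by (simp add: beta_eq sum_distrib_left[symmetric] geometric_sum)

text \<open>The dual averaging objective; x^t is its minimiser.\<close>
definition dual_avg_obj :: "(nat \<Rightarrow> 'n) \<Rightarrow> nat \<Rightarrow> real^'d \<Rightarrow> real" where
  "dual_avg_obj I t w = B t * g_real w + inner (st I t) w + norm (w - x0)^2 / 2"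

lemma xt_finite: "t > 0 \<Longrightarrow> g (xt I t) < \<infinity>"
  using prox_g_finite[OF B_pos] by (cases t) (auto simp: xt_Suc Bsum_eq_B)

lemma xt_growth:
  assumes "g w < \<infinity>"
  shows "dual_avg_obj I t (xt I t) + (1 + \<mu> * B t) / 2 * norm (w - xt I t)^2 \<le> dual_avg_obj I t w"
proof (cases t)
  case 0
  thus ?thesis by (simp add: dual_avg_obj_def xt_0 st_0 B_def)
next
  case (Suc t')
  have "B t * g_real (xt I t) + norm (xt I t - (x0 - st I t))^2 / 2
      + (B t * \<mu> + 1) / 2 * norm (w - xt I t)^2
      \<le> B t * g_real w + norm (w - (x0 - st I t))^2 / 2"
    unfolding Suc xt_Suc Bsum_eq_B by (rule prox_g_growth[OF B_pos assms]) simp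
  thus ?thesis unfolding dual_avg_obj_def norm_sq_shift by (simp add: algebra_simps)
qed

definition gap :: "(nat \<Rightarrow> 'n) \<Rightarrow> nat \<Rightarrow> real" where
  "gap I t = dual_avg_obj I t xs - dual_avg_obj I t (xt I t)"

lemma gap_prefix:
  assumes "\<And>k. k < t \<Longrightarrow> I k = I' k"
  shows "gap I t = gap I' t"
  using iterates_prefix(1,3)[OF assms] unfolding gap_def dual_avg_obj_def by simp

lemma gap_fun_upd: "gap (I(t := j)) t = gap I t"
  by (rule gap_prefix) simp

lemma gap_nonneg: "gap I t \<ge> 0"
  using xt_growth[OF g_xs_finite, of I t] mu_pos B_nonneg[of t] unfolding gap_def
  by (smt (verit) mult_nonneg_nonneg zero_le_power2 divide_nonneg_pos)


lemma coupling_grad_diff: "coupling_grad (y - y') = coupling_grad y - coupling_grad y'"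
  unfolding coupling_grad_def by (simp add: matrix_vector_mult_diff_distrib scaleR_diff_right)

lemma dual_avg_obj_Suc:
  "dual_avg_obj I (Suc t) w = dual_avg_obj I t w
     + \<beta> t * (g_real w + inner (coupling_grad (yt I t)) w
     + (ynext I t (I t) - yt I t $ I t) * inner (A $ I t) w)"
proof -
  let ?yb = "yt I t + real CARD('n) *\<^sub>R (yt I (Suc t) - yt I t)"
  have "?yb $ j
      = yt I t $ j + real CARD('n) * (if j = I t then ynext I t (I t) - yt I t $ I t else 0)" for j
    unfolding yt_Suc by simp
  hence "inner (transpose A *v ?yb) w = (\<Sum>j\<in>UNIV. yt I t $ j * inner (A $ j) w
      + (if j = I t then real CARD('n) * (ynext I t (I t) - yt I t $ I t) * inner (A $ I t) w
         else 0))"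
    unfolding inner_transpose_matrix_vector_mult_rows by (intro sum.cong) (auto simp: algebra_simps)
  also have "\<dots> = (\<Sum>j\<in>UNIV. yt I t $ j * inner (A $ j) w)
      + real CARD('n) * (ynext I t (I t) - yt I t $ I t) * inner (A $ I t) w"
    by (simp add: sum.distrib)
  finally have ip: "inner (transpose A *v ?yb) w = (\<Sum>j\<in>UNIV. yt I t $ j * inner (A $ j) w)
      + real CARD('n) * (ynext I t (I t) - yt I t $ I t) * inner (A $ I t) w" .
  show ?thesis
    unfolding dual_avg_obj_def st_Suc B_Suc inner_add_left inner_scaleR_left ip inner_coupling_grad
    using card_pos by (simp add: field_simps del: transpose_matrix_vector)
qed

lemma primal_steps_le:
  fixes I t
  defines "x \<equiv> xt I t" and "x' \<equiv> xt I (Suc t)" and "y \<equiv> yt I t" and "xb \<equiv> xbar I t"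
  shows "\<beta> t * (g_real xb + inner (coupling_grad y) xb) + \<xi> ^ t / 2 * norm (x' - xb)^2
    \<le> \<beta> t * (g_real x' + inner (coupling_grad y) x') + dual_avg_obj I t x' - dual_avg_obj I t x"
proof -
  define e where "e = \<xi> ^ t"
  have e: "e \<ge> 0" unfolding e_def using xi_ge_1 by simp
  have gx': "g x' < \<infinity>" unfolding x'_def by (rule xt_finite) simp
  have "dual_avg_obj I t x + (1 + \<mu> * B t) / 2 * norm (x' - x)^2 \<le> dual_avg_obj I t x'"
    unfolding x_def by (rule xt_growth[OF gx'])
  moreover have "e / 2 * norm (x' - x)^2 \<le> (1 + \<mu> * B t) / 2 * norm (x' - x)^2"
    using xi_power_le[of t] unfolding e_def by (intro mult_right_mono) auto
  moreover have "e * (\<eta> * (g_real xb + inner (coupling_grad y) xb) + norm (xb - x)^2 / 2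
        + (\<eta> * \<mu> + 1) / 2 * norm (x' - xb)^2)
      \<le> e * (\<eta> * (g_real x' + inner (coupling_grad y) x') + norm (x' - x)^2 / 2)"
    using xbar_growth[OF gx', of I t] e unfolding x_def y_def xb_def by (rule mult_left_mono)
  moreover have "0 \<le> e * norm (xb - x)^2 / 2 + e * (\<eta> * \<mu>) / 2 * norm (x' - xb)^2"
    using e eta_pos mu_pos by simp
  ultimately show ?thesis
    unfolding e_def[symmetric] beta_eq by (simp add: algebra_simps add_divide_distrib)
qed

lemma gap_Suc_le:
  fixes I t
  defines "i \<equiv> I t" and "y \<equiv> yt I t" and "xb \<equiv> xbar I t" and "\<delta> \<equiv> ynext I t (I t) - yt I t $ I t"
  shows "gap I (Suc t) \<le> gap I t - \<beta> t * \<mu> / 2 * norm (xb - xs)^2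
     - \<beta> t * inner (coupling_grad (y - ys)) (xb - xs) - \<beta> t * \<delta> * inner (A $ i) (xb - xs)
     + \<beta> t / (2 * \<tau>) * \<delta>^2"
proof -
  define x' where "x' = xt I (Suc t)"
  have "\<bar>inner (A $ i) (x' - xb)\<bar> \<le> R * norm (x' - xb)"
    by (rule order_trans[OF Cauchy_Schwarz_ineq2 mult_right_mono[OF row_norm_le norm_ge_zero]])
  hence young: "- (\<beta> t * \<delta> * inner (A $ i) (x' - xb))
      \<le> \<xi> ^ t / 2 * norm (x' - xb)^2 + \<beta> t / (2 * \<tau>) * \<delta>^2"
    using neg_mult_le_young[OF _ eta_pos tau_pos step_product_le] xi_ge_1 by (simp add: beta_eq)
  have growth:
    "\<mu> / 2 * norm (xb - xs)^2 \<le> g_real xb - g_real xs + inner (coupling_grad ys) (xb - xs)"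
    unfolding xb_def by (rule primal_strong_growth[OF xbar_finite])
  have "gap I (Suc t) = gap I t + (dual_avg_obj I t (xt I t) - dual_avg_obj I t x')
      + \<beta> t * (g_real xs + inner (coupling_grad y) xs + \<delta> * inner (A $ i) xs)
      - \<beta> t * (g_real x' + inner (coupling_grad y) x' + \<delta> * inner (A $ i) x')"
    unfolding gap_def dual_avg_obj_Suc x'_def y_def \<delta>_def i_def by simp
  also have "\<dots> \<le> gap I t - \<beta> t * (g_real xb - g_real xs + inner (coupling_grad y) (xb - xs))
      - \<beta> t * \<delta> * inner (A $ i) (xb - xs) + \<beta> t / (2 * \<tau>) * \<delta>^2"
    using primal_steps_le[of t I] young unfolding x'_def[symmetric] y_def xb_def
    by (simp add: inner_diff_right algebra_simps)
  also have "\<dots> \<le> gap I t - \<beta> t * \<mu> / 2 * norm (xb - xs)^2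
     - \<beta> t * inner (coupling_grad (y - ys)) (xb - xs) - \<beta> t * \<delta> * inner (A $ i) (xb - xs)
     + \<beta> t / (2 * \<tau>) * \<delta>^2"
    using mult_left_mono[OF growth less_imp_le[OF beta_pos[of t]]]
    by (simp add: coupling_grad_diff inner_diff_left algebra_simps)
  finally show ?thesis .
qed

lemma dual_three_point:
  fixes I t j
  defines "y \<equiv> yt I t" and "xb \<equiv> xbar I t" and "v \<equiv> ynext I t j"
  shows "(v - y $ j)^2 / 2 + (1 + \<tau> * \<gamma>) / 2 * (v - ys $ j)^2
    \<le> (y $ j - ys $ j)^2 / 2 + \<tau> * inner (A $ j) (xb - xs) * (v - ys $ j)"
proof -
  have "1 / \<gamma> \<ge> 0" using gamma_pos by simp
  then obtain z where z: "deriv (f j) z + \<tau> * z = y $ j + \<tau> * inner (A $ j) xb"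
    using deriv_add_linear_surj[OF convex_f smooth_f _ tau_pos] by metis
  have v: "v = deriv (f j) z"
    unfolding v_def ynext_def y_def[symmetric] xb_def[symmetric] z[symmetric]
    by (rule prox_conj_fun[OF convex_f smooth_f gamma_pos tau_pos])
  have "inner (A $ j) xs * (v - ys $ j) \<le> (v * z - f j z) - conj_ys j"
    by (rule dual_optimality) (simp add: v conj_fun_deriv[OF convex_f smooth_f])
  moreover have "ys $ j * z - f j z + \<gamma> / 2 * (ys $ j - v)^2 \<le> conj_ys j"
    using conj_fun_ge_smooth[OF smooth_f[of j] gamma_pos, of "ys $ j" z] conj_ys_ereal[of j] v
    by simp
  ultimately have "inner (A $ j) xs * (v - ys $ j) \<le> z * (v - ys $ j) - \<gamma> / 2 * (v - ys $ j)^2"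
    by (simp add: power2_commute algebra_simps)
  hence "\<tau> * (inner (A $ j) xs * (v - ys $ j)) \<le> \<tau> * (z * (v - ys $ j) - \<gamma> / 2 * (v - ys $ j)^2)"
    using tau_pos by (intro mult_left_mono) auto
  hence "\<tau> * inner (A $ j) xs * (v - ys $ j) \<le> (\<tau> * z) * (v - ys $ j) - \<tau> * \<gamma> / 2 * (v - ys $ j)^2"
    by (simp add: algebra_simps)
  moreover have "\<tau> * z = y $ j + \<tau> * inner (A $ j) xb - v" using z v by simp
  ultimately have "\<tau> * inner (A $ j) xs * (v - ys $ j)
      \<le> (y $ j + \<tau> * inner (A $ j) xb - v) * (v - ys $ j) - \<tau> * \<gamma> / 2 * (v - ys $ j)^2"
    by simp
  moreover have
    "(v - y $ j) * (v - ys $ j) = (v - y $ j)^2 / 2 + (v - ys $ j)^2 / 2 - (y $ j - ys $ j)^2 / 2"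
    by (simp add: power2_eq_square field_simps)
  ultimately show ?thesis by (simp add: inner_diff_right algebra_simps add_divide_distrib)
qed

definition dual_coef :: real where
  "dual_coef = 1 + \<tau> * \<gamma> * (real CARD('n) - 1) / real CARD('n)"

definition lyap :: "(nat \<Rightarrow> 'n) \<Rightarrow> nat \<Rightarrow> real" where
  "lyap I t = gap I t + \<beta> t * dual_coef / (2 * \<tau>) * norm (yt I t - ys)^2"

lemma dual_coef_ge_1: "dual_coef \<ge> 1"
  unfolding dual_coef_def using tau_pos gamma_pos by simp

lemma beta_Suc_dual_coef_le: "\<beta> (Suc t) * dual_coef \<le> \<beta> t * (1 + \<tau> * \<gamma>)"
  using mult_left_mono[OF xi_dual, of "\<eta> * \<xi> ^ t"] eta_pos xi_ge_1
  unfolding beta_eq dual_coef_def by (simp add: mult_ac)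

lemma lyap_nonneg: "lyap I t \<ge> 0"
  unfolding lyap_def using gap_nonneg beta_pos[of t] dual_coef_ge_1 tau_pos by simp

lemma norm_yt_Suc_upd:
  "norm (yt (I(t := i)) (Suc t) - ys)^2
    = norm (yt I t - ys)^2 - (yt I t $ i - ys $ i)^2 + (ynext I t i - ys $ i)^2"
proof -
  have "norm (yt (I(t := i)) (Suc t) - ys)^2
      = (\<Sum>j\<in>UNIV. if j = i then (ynext I t i - ys $ i)^2 else (yt I t $ j - ys $ j)^2)"
    unfolding norm_sq_vec_sum yt_Suc iterates_fun_upd by (intro sum.cong) auto
  thus ?thesis by (simp add: sum_if_eq norm_sq_vec_sum)
qed

lemma lyap_Suc_upd_le:
  fixes I t i
  defines "y \<equiv> yt I t" and "xb \<equiv> xbar I t" and "K \<equiv> \<beta> (Suc t) * dual_coef / (2 * \<tau>)"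
  shows "lyap (I(t := i)) (Suc t) \<le> gap I t - \<beta> t * \<mu> / 2 * norm (xb - xs)^2
      - \<beta> t * inner (coupling_grad (y - ys)) (xb - xs) + K * norm (y - ys)^2
      + (\<beta> t / (2 * \<tau>) - K) * (y $ i - ys $ i)^2 + \<beta> t * (y $ i - ys $ i) * inner (A $ i) (xb - xs)"
proof -
  define v where "v = ynext I t i"
  have gap: "gap (I(t := i)) (Suc t) \<le> gap I t - \<beta> t * \<mu> / 2 * norm (xb - xs)^2
     - \<beta> t * inner (coupling_grad (y - ys)) (xb - xs) - \<beta> t * (v - y $ i) * inner (A $ i) (xb - xs)
     + \<beta> t / (2 * \<tau>) * (v - y $ i)^2"
    using gap_Suc_le[of "I(t := i)" t] unfolding iterates_fun_upd gap_fun_upd y_def xb_def v_def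
    by simp
  have "\<beta> t / \<tau> * ((v - y $ i)^2 / 2 + (1 + \<tau> * \<gamma>) / 2 * (v - ys $ i)^2)
      \<le> \<beta> t / \<tau> * ((y $ i - ys $ i)^2 / 2 + \<tau> * inner (A $ i) (xb - xs) * (v - ys $ i))"
    using beta_pos[of t] tau_pos dual_three_point[of I t i]
    unfolding y_def xb_def v_def by (intro mult_left_mono) auto
  hence dual: "\<beta> t / (2 * \<tau>) * (v - y $ i)^2 + \<beta> t * (1 + \<tau> * \<gamma>) / (2 * \<tau>) * (v - ys $ i)^2
      \<le> \<beta> t / (2 * \<tau>) * (y $ i - ys $ i)^2 + \<beta> t * inner (A $ i) (xb - xs) * (v - ys $ i)"
    using tau_pos by (simp add: field_simps)
  have "K * (v - ys $ i)^2 \<le> \<beta> t * (1 + \<tau> * \<gamma>) / (2 * \<tau>) * (v - ys $ i)^2"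
    unfolding K_def using beta_Suc_dual_coef_le[of t] tau_pos
    by (intro mult_right_mono divide_right_mono) auto
  with gap dual show ?thesis
    unfolding lyap_def norm_yt_Suc_upd K_def[symmetric] y_def[symmetric] v_def[symmetric]
    by (simp add: algebra_simps)
qed

lemma lyap_avg_le:
  "(\<Sum>i\<in>UNIV. lyap (I(t := i)) (Suc t)) / real CARD('n)
    \<le> lyap I t - \<beta> t * \<mu> / 2 * norm (xbar I t - xs)^2"
proof -
  define n where "n = real CARD('n)"
  define y where "y = yt I t"
  define xb where "xb = xbar I t"
  define K where "K = \<beta> (Suc t) * dual_coef / (2 * \<tau>)"
  define D where "D = gap I t - \<beta> t * \<mu> / 2 * norm (xb - xs)^2"
  define c where "c = inner (coupling_grad (y - ys)) (xb - xs)"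
  have n: "n \<ge> 1" unfolding n_def by (simp add: Suc_le_eq)
  have c: "(\<Sum>i\<in>UNIV. (y $ i - ys $ i) * inner (A $ i) (xb - xs)) = n * c"
    unfolding c_def inner_coupling_grad n_def by simp
  have "lyap (I(t := i)) (Suc t) \<le> D - \<beta> t * c + K * norm (y - ys)^2
      + (\<beta> t / (2 * \<tau>) - K) * (y $ i - ys $ i)^2
      + \<beta> t * ((y $ i - ys $ i) * inner (A $ i) (xb - xs))"
    for i
    using lyap_Suc_upd_le[of I t i] unfolding D_def c_def y_def xb_def K_def
    by (simp add: mult.assoc)
  hence "(\<Sum>i\<in>UNIV. lyap (I(t := i)) (Suc t))
      \<le> (\<Sum>i\<in>UNIV. D - \<beta> t * c + K * norm (y - ys)^2
          + (\<beta> t / (2 * \<tau>) - K) * (y $ i - ys $ i)^2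
          + \<beta> t * ((y $ i - ys $ i) * inner (A $ i) (xb - xs)))"
    by (rule sum_mono)
  also have "\<dots> = n * (D - \<beta> t * c + K * norm (y - ys)^2)
      + (\<beta> t / (2 * \<tau>) - K) * (\<Sum>i\<in>UNIV. (y $ i - ys $ i)^2)
      + \<beta> t * (\<Sum>i\<in>UNIV. (y $ i - ys $ i) * inner (A $ i) (xb - xs))"
    by (simp add: sum.distrib sum_distrib_left n_def)
  also have "\<dots> = n * D + (\<beta> t / (2 * \<tau>) + (n - 1) * K) * norm (y - ys)^2"
    unfolding c norm_sq_vec_sum[of "y - ys"] by (simp add: algebra_simps)
  also have "\<dots> \<le> n * D
      + (\<beta> t / (2 * \<tau>) + (n - 1) * (\<beta> t * (1 + \<tau> * \<gamma>) / (2 * \<tau>))) * norm (y - ys)^2"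
    using beta_Suc_dual_coef_le[of t] tau_pos n unfolding K_def
    by (intro add_left_mono mult_right_mono mult_left_mono divide_right_mono) auto
  also have "\<dots> = n * (lyap I t - \<beta> t * \<mu> / 2 * norm (xbar I t - xs)^2)"
    using n tau_pos
    unfolding lyap_def D_def dual_coef_def n_def[symmetric] y_def xb_def by (simp add: field_simps)
  finally show ?thesis using n unfolding n_def by (simp add: pos_divide_le_eq mult.commute)
qed

definition lyap_acc :: "(nat \<Rightarrow> 'n) \<Rightarrow> nat \<Rightarrow> real" where
  "lyap_acc I t = lyap I t + (\<Sum>k<t. \<beta> k * \<mu> / 2 * norm (xbar I k - xs)^2)"

definition lyap_init :: real where
  "lyap_init = norm (xs - x0)^2 / 2 + \<beta> 0 * dual_coef / (2 * \<tau>) * norm (y0 - ys)^2"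

lemma lyap_acc_0: "lyap_acc I 0 = lyap_init"
  unfolding lyap_acc_def lyap_def lyap_init_def gap_def dual_avg_obj_def
  by (simp add: xt_0 yt_0 st_0 B_def)

lemma lyap_acc_prefix:
  assumes "\<And>k. k < t \<Longrightarrow> I k = I' k"
  shows "lyap_acc I t = lyap_acc I' t"
proof -
  have "xbar I k = xbar I' k" if "k < t" for k
    by (rule iterates_prefix) (use assms that in auto)
  thus ?thesis
    using gap_prefix[OF assms] iterates_prefix(2)[OF assms] unfolding lyap_acc_def lyap_def by simp
qed

lemma lyap_acc_avg_le: "(\<Sum>i\<in>UNIV. lyap_acc (I(t := i)) (Suc t)) / real CARD('n) \<le> lyap_acc I t"
proof -
  have xbar_upd: "xbar (I(t := i)) k = xbar I k" if "k < Suc t" for k i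
    by (rule iterates_prefix) (use that in auto)
  have "(\<Sum>i\<in>UNIV. lyap_acc (I(t := i)) (Suc t)) / real CARD('n)
      = (\<Sum>i\<in>UNIV. lyap (I(t := i)) (Suc t)) / real CARD('n)
        + (\<Sum>k<Suc t. \<beta> k * \<mu> / 2 * norm (xbar I k - xs)^2)"
    unfolding lyap_acc_def using card_pos by (simp add: sum.distrib xbar_upd add_divide_distrib)
  also have "\<dots> \<le> lyap_acc I t"
    using lyap_avg_le[of I t] unfolding lyap_acc_def by simp
  finally show ?thesis .
qed

lemma expect_lyap_acc_le: "expect_idx T (\<lambda>I. lyap_acc I T) \<le> lyap_init"
proof (induction T)
  case 0
  show ?case by (simp add: lyap_acc_0 expect_idx_const)
next
  case (Suc T)
  have "expect_idx (Suc T) (\<lambda>I. lyap_acc I (Suc T))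
      = expect_idx T (\<lambda>I. (\<Sum>i\<in>UNIV. lyap_acc (I(T := i)) (Suc T)) / real CARD('n))"
    by (rule expect_idx_Suc) (auto intro: lyap_acc_prefix)
  also have "\<dots> \<le> expect_idx T (\<lambda>I. lyap_acc I T)"
    by (intro expect_idx_mono lyap_acc_avg_le)
  finally show ?case using Suc by simp
qed

lemma expected_error_bound:
  assumes \<xi>: "\<xi> > 1" and T: "T \<ge> 1"
  shows "expect_idx T (\<lambda>I. norm (sdapd_xhat A f g \<eta> \<tau> \<beta> x0 y0 I T - xs)^2)
     \<le> (2 * lyap_init * (\<xi> - 1) / (\<mu> * \<eta>)) / (\<xi> ^ T - 1)"
proof -
  have BT: "B T > 0" using T by (intro B_pos) simp
  have err_le: "norm (sdapd_xhat A f g \<eta> \<tau> \<beta> x0 y0 I T - xs)^2 \<le> 2 / (\<mu> * B T) * lyap_acc I T" for I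
  proof -
    have "sdapd_xhat A f g \<eta> \<tau> \<beta> x0 y0 I T = (1 / (\<Sum>t<T. \<beta> t)) *\<^sub>R (\<Sum>t<T. \<beta> t *\<^sub>R xbar I t)"
      unfolding sdapd_xhat_def xbar_def using T Bsum_eq_B[of "T - 1"] by (simp add: B_def)
    hence "norm (sdapd_xhat A f g \<eta> \<tau> \<beta> x0 y0 I T - xs)^2
        \<le> 1 / B T * (\<Sum>t<T. \<beta> t * norm (xbar I t - xs)^2)"
      using norm_weighted_mean_diff_sq_le[of \<beta> T "xbar I" xs] beta_pos BT
      by (simp add: B_def less_imp_le)
    also have "\<dots> = 2 / (\<mu> * B T) * (\<Sum>t<T. \<beta> t * \<mu> / 2 * norm (xbar I t - xs)^2)"
      using mu_pos by (simp add: sum_distrib_left sum_divide_distrib mult_ac)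
    also have "\<dots> \<le> 2 / (\<mu> * B T) * lyap_acc I T"
      unfolding lyap_acc_def using lyap_nonneg[of I T] mu_pos BT by (intro mult_left_mono) auto
    finally show ?thesis .
  qed
  have "expect_idx T (\<lambda>I. norm (sdapd_xhat A f g \<eta> \<tau> \<beta> x0 y0 I T - xs)^2)
      \<le> 2 / (\<mu> * B T) * expect_idx T (\<lambda>I. lyap_acc I T)"
    unfolding expect_idx_cmult[symmetric] by (rule expect_idx_mono[OF err_le])
  also have "\<dots> \<le> 2 / (\<mu> * B T) * lyap_init"
    using expect_lyap_acc_le mu_pos BT by (intro mult_left_mono) auto
  also have "\<dots> = (2 * lyap_init * (\<xi> - 1) / (\<mu> * \<eta>)) / (\<xi> ^ T - 1)"
  proof -
    have "\<xi> - 1 > 0" "\<xi> ^ T - 1 > 0" using \<xi> T one_less_power[OF \<xi>, of T] by auto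
    thus ?thesis unfolding B_geometric[OF \<xi>] using eta_pos mu_pos by (simp add: field_simps)
  qed
  finally show ?thesis .
qed

lemma lyap_init_nonneg: "lyap_init \<ge> 0"
  unfolding lyap_init_def using beta_pos[of 0] dual_coef_ge_1 tau_pos by simp

end

section \<open>The step sizes of the theorem\<close>

lemma paper_step_sizes:
  fixes n \<gamma> \<mu> R :: real
  assumes n: "n \<ge> 1" and \<gamma>: "\<gamma> > 0" and \<mu>: "\<mu> > 0" and R: "R > 0"
  defines "\<eta> \<equiv> (1 / R) * sqrt (\<gamma> / (n * \<mu>))" and "\<tau> \<equiv> (1 / R) * sqrt (n * \<mu> / \<gamma>)"
    and "\<xi> \<equiv> 1 + 1 / (n + R * sqrt (n / (\<mu> * \<gamma>)))"
  shows "\<eta> > 0" and "\<tau> > 0" and "\<xi> > 1" and "\<eta> * \<tau> * R^2 \<le> 1" and "\<xi> - 1 \<le> \<mu> * \<eta>"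
    and "\<xi> * (1 + \<tau> * \<gamma> * (n - 1) / n) \<le> 1 + \<tau> * \<gamma>"
proof -
  define s where "s = R * sqrt (n / (\<mu> * \<gamma>))"
  have s: "s > 0" unfolding s_def using n \<gamma> \<mu> R by simp
  show "\<eta> > 0" "\<tau> > 0" unfolding \<eta>_def \<tau>_def using n \<gamma> \<mu> R by simp_all
  have "sqrt (\<gamma> / (n * \<mu>)) * sqrt (n * \<mu> / \<gamma>) = 1"
    unfolding real_sqrt_mult[symmetric] using n \<gamma> \<mu> by simp
  thus "\<eta> * \<tau> * R^2 \<le> 1" unfolding \<eta>_def \<tau>_def using R by (simp add: power2_eq_square field_simps)
  have "sqrt (n / (\<mu> * \<gamma>)) * sqrt (\<gamma> / (n * \<mu>)) = sqrt ((1 / \<mu>)^2)"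
    unfolding real_sqrt_mult[symmetric] using n \<gamma> \<mu> by (simp add: power2_eq_square field_simps)
  also have "\<dots> = 1 / \<mu>" using \<mu> by simp
  finally have "s * (\<mu> * \<eta>) = 1" unfolding s_def \<eta>_def using \<mu> R by (simp add: field_simps)
  hence \<mu>\<eta>: "\<mu> * \<eta> = 1 / s" using s by (simp add: field_simps)
  have "sqrt (n / (\<mu> * \<gamma>)) * sqrt (n * \<mu> / \<gamma>) = sqrt ((n / \<gamma>)^2)"
    unfolding real_sqrt_mult[symmetric] using n \<gamma> \<mu> by (simp add: power2_eq_square field_simps)
  also have "\<dots> = n / \<gamma>" using n \<gamma> by simp
  finally have "s * (\<tau> * \<gamma>) = n" unfolding s_def \<tau>_def using n \<gamma> R by (simp add: field_simps)
  hence \<tau>\<gamma>: "\<tau> * \<gamma> = n / s" using s by (simp add: field_simps)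
  have \<xi>: "\<xi> = 1 + 1 / (n + s)" unfolding \<xi>_def s_def ..
  show "\<xi> > 1" unfolding \<xi> using n s by simp
  show "\<xi> - 1 \<le> \<mu> * \<eta>" unfolding \<xi> \<mu>\<eta> using n s by (simp add: frac_le)
  have "\<xi> = (n + s + 1) / (n + s)" and "1 + \<tau> * \<gamma> * (n - 1) / n = (s + n - 1) / s"
    unfolding \<xi> \<tau>\<gamma> using n s by (simp_all add: field_simps)
  hence "\<xi> * (1 + \<tau> * \<gamma> * (n - 1) / n) = ((n + s + 1) * (s + n - 1)) / ((n + s) * s)" by simp
  also have "\<dots> = ((n + s)^2 - 1) / ((n + s) * s)" by (simp add: power2_eq_square algebra_simps)
  also have "\<dots> \<le> (n + s)^2 / ((n + s) * s)" using n s by (intro divide_right_mono) auto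
  also have "\<dots> = (n + s) / s"
    using n s by (simp add: power2_eq_square nonzero_mult_divide_mult_cancel_left)
  also have "\<dots> = 1 + \<tau> * \<gamma>" unfolding \<tau>\<gamma> using s by (simp add: field_simps)
  finally show "\<xi> * (1 + \<tau> * \<gamma> * (n - 1) / n) \<le> 1 + \<tau> * \<gamma>" .
qed

theorem theorem3p5:
  fixes A :: "real^'d^'n::finite"
    and f :: "'n \<Rightarrow> real \<Rightarrow> real"
    and g :: "real^'d \<Rightarrow> ereal"
    and \<gamma> \<mu> :: real
    and x0 xs :: "real^'d" and y0 ys :: "real^'n"
  defines "n \<equiv> real CARD('n)"
  defines "Rb \<equiv> Max (range (\<lambda>i. norm (A $ i)))"
  defines "\<eta> \<equiv> (1 / Rb) * sqrt (\<gamma> / (n * \<mu>))"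
  defines "\<tau> \<equiv> (1 / Rb) * sqrt (n * \<mu> / \<gamma>)"
  defines "\<xi> \<equiv> 1 + 1 / (n + Rb * sqrt (n / (\<mu> * \<gamma>)))"
  defines "\<beta> \<equiv> (\<lambda>t::nat. (1 / Rb) * sqrt (\<gamma> / (n * \<mu>)) * \<xi> ^ t)"
  assumes "\<gamma> > 0" and "\<mu> > 0"
    and "Rb > 0"
    and "\<And>i. convex_on UNIV (f i)"
    and "\<And>i. smooth_with (1 / \<gamma>) (f i)"
    and "closed_proper_fun g"
    and "strongly_convex_ereal \<mu> g"
    and "is_saddle A f g xs ys"
  shows "\<exists>\<Delta>0 \<ge> 0. \<forall>T \<ge> 1.
    expect_idx T (\<lambda>I. norm (sdapd_xhat A f g \<eta> \<tau> \<beta> x0 y0 I T - xs)^2) \<le> \<Delta>0 / (\<xi> ^ T - 1)"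
proof -
  have "n \<ge> 1" unfolding n_def by (simp add: Suc_le_eq)
  note steps = paper_step_sizes[OF this \<open>\<gamma> > 0\<close> \<open>\<mu> > 0\<close> \<open>Rb > 0\<close>,
      folded \<eta>_def \<tau>_def \<xi>_def, unfolded n_def]
  have "norm (A $ i) \<le> Rb" for i unfolding Rb_def by (rule Max_ge) auto
  moreover have "\<beta> = (\<lambda>t. \<eta> * \<xi> ^ t)" unfolding \<beta>_def \<eta>_def ..
  ultimately interpret sdapd_setting A f g \<gamma> \<mu> \<eta> \<tau> \<xi> Rb \<beta> x0 xs y0 ys
    using assms(7-) steps by unfold_locales auto
  show ?thesis
    using expected_error_bound[OF steps(3)] lyap_init_nonneg steps(1,3) \<open>\<mu> > 0\<close>
    by (intro exI[of _ "2 * lyap_init * (\<xi> - 1) / (\<mu> * \<eta>)"]) auto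
qed

end
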